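(* Let $n \geq 1$, $N := 2^n$, and let $\ket{\psi} \in \mathbb{C}^N$ be any $n$-qubit (unit-norm) state. Then there exists a subset $S \subseteq [N]$ such that $|\langle S | \psi\rangle| \geq \dfrac{1}{8\sqrt{n+3}}$.
   Context: The computational basis of $n$ qubits is indexed by $[N] = \{1,\dots,N\}$, $N = 2^n$, written $\ket{1},\dots,\ket{N}$. For a nonempty subset $S \subseteq [N]$, the subset state is $\ket{S} := \frac{1}{\sqrt{|S|}} \sum_{i \in S} \ket{i}$. *)

theory Defs
  imports "HOL-Analysis.Analysis"
begin

text \<open>States of n qubits are functions from the basis index set {1..2^n} to complex
  amplitudes (values outside {1..2^n} are ignored).\<close>

definition subset_state :: "nat set \<Rightarrow> nat \<Rightarrow> complex" where
  "subset_state S i = (if i \<in> S then complex_of_real (1 / sqrt (real (card S))) else 0)"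

definition braket :: "nat \<Rightarrow> (nat \<Rightarrow> complex) \<Rightarrow> (nat \<Rightarrow> complex) \<Rightarrow> complex" where
  "braket N phi psi = (\<Sum>i\<in>{1..N}. cnj (phi i) * psi i)"

end

theory Submission
  imports Defs
begin

text \<open>Rotating \<open>\<psi>\<close> by one of the phases \<open>\<plusminus>1, \<plusminus>\<i>\<close> makes the positive parts of the real
  parts carry at least a quarter of the mass. For nonnegative weights \<open>a\<close> on a set of size \<open>k\<close>
  some nonempty subset \<open>S\<close> satisfies \<open>|S| \<Sum> a\<^sup>2 \<le> (\<Sum>\<^sub>S a)\<^sup>2 (1 + ln k)\<close>: by induction, either the
  whole set works or the smallest weight is negligible and can be dropped, the loss being paid
  for by \<open>ln k - ln (k - 1) \<ge> 1/k\<close>. Applied to those positive parts this gives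
  \<open>|\<langle>S|\<psi>\<rangle>|\<^sup>2 \<ge> 1 / (4 (1 + ln 2\<^sup>n))\<close>.\<close>

lemma ln_diff_one_plus_inverse_le:
  assumes "k \<ge> (2::nat)"
  shows "ln (real (k - 1)) + 1 / real k \<le> ln (real k)"
proof -
  have pos: "real k - 1 > 0" using assms by simp
  have "ln ((real k - 1) / real k) \<le> (real k - 1) / real k - 1"
    using pos by (intro ln_le_minus_one) simp
  moreover have "ln ((real k - 1) / real k) = ln (real k - 1) - ln (real k)"
    using pos by (simp add: ln_div)
  moreover have "(real k - 1) / real k - 1 = - 1 / real k"
    using pos by (simp add: field_simps)
  ultimately show ?thesis using assms by (simp add: of_nat_diff)
qed

lemma drop_small_square_inequality:
  fixes k q Q L L' :: real
  assumes "0 < k" "0 \<le> q" "0 \<le> L" "L + 1 / k \<le> L'" "k * q * L' < Q + q"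
  shows "(Q + q) * L \<le> Q * L'"
proof -
  have "k * q * L + q = k * q * (L + 1 / k)" using assms(1) by (simp add: field_simps)
  also have "\<dots> \<le> k * q * L'" using assms by (intro mult_left_mono) auto
  finally have Q_ge: "k * q * L \<le> Q" using assms(5) by linarith
  then have "0 \<le> Q" using assms(1-3) by (smt (verit) mult_nonneg_nonneg)
  have "q * L \<le> Q / k" using Q_ge assms(1) by (simp add: field_simps)
  moreover have "Q * (L + 1 / k) \<le> Q * L'" using assms(4) \<open>0 \<le> Q\<close> by (rule mult_left_mono)
  ultimately show ?thesis by (simp add: algebra_simps)
qed

lemma sum_squares_bound_drop_minimum:
  fixes a :: "'a \<Rightarrow> real" and c T :: real
  assumes "finite A" "m \<in> A" "0 \<le> a m" "\<forall>i\<in>A. a m \<le> a i" "2 \<le> card A" "0 \<le> c"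
    and whole_fails:
      "(\<Sum>i\<in>A. a i)\<^sup>2 * (1 + ln (real (card A))) < real (card A) * (\<Sum>i\<in>A. (a i)\<^sup>2)"
    and rest: "c * (\<Sum>i\<in>A - {m}. (a i)\<^sup>2) \<le> T * (1 + ln (real (card A - 1)))"
  shows "c * (\<Sum>i\<in>A. (a i)\<^sup>2) \<le> T * (1 + ln (real (card A)))"
proof -
  define k where "k = card A"
  define Q where "Q = (\<Sum>i\<in>A - {m}. (a i)\<^sup>2)"
  define L where "L = 1 + ln (real (k - 1))"
  define L' where "L' = 1 + ln (real k)"
  have k2: "2 \<le> k" using assms(5) by (simp add: k_def)
  have "1 \<le> real (k - 1)" using k2 by simp
  then have L_pos: "0 < L" unfolding L_def by (smt (verit) ln_ge_zero)
  have QA: "(\<Sum>i\<in>A. (a i)\<^sup>2) = Q + (a m)\<^sup>2"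
    unfolding Q_def using assms(1,2) by (simp add: sum.remove)
  have "real k * a m \<le> (\<Sum>i\<in>A. a i)"
    using sum_mono[of A "\<lambda>_. a m" a] assms(4) by (simp add: k_def)
  then have "(real k * a m)\<^sup>2 * L' \<le> (\<Sum>i\<in>A. a i)\<^sup>2 * L'"
    using assms(3) k2 by (intro mult_right_mono power_mono) (auto simp: L'_def)
  with whole_fails have "(real k * a m)\<^sup>2 * L' < real k * (Q + (a m)\<^sup>2)"
    unfolding QA k_def L'_def by linarith
  then have "real k * (real k * (a m)\<^sup>2 * L') < real k * (Q + (a m)\<^sup>2)"
    by (simp add: power_mult_distrib power2_eq_square algebra_simps)
  then have "real k * (a m)\<^sup>2 * L' < Q + (a m)\<^sup>2"
    using k2 by (subst (asm) mult_less_cancel_left_pos) auto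
  then have drop: "(Q + (a m)\<^sup>2) * L \<le> Q * L'"
    using ln_diff_one_plus_inverse_le[OF k2] k2 L_pos
    by (intro drop_small_square_inequality) (auto simp: L_def L'_def)
  have "0 \<le> L'" using k2 by (simp add: L'_def)
  then have "c * (Q + (a m)\<^sup>2) * L \<le> T * L' * L"
    using mult_left_mono[OF drop assms(6)] mult_right_mono[OF rest, of L']
    by (simp add: Q_def L_def k_def algebra_simps)
  then show ?thesis using L_pos by (simp add: QA k_def L'_def mult_le_cancel_right)
qed

lemma exists_subset_card_mult_sum_squares_le:
  fixes a :: "'a \<Rightarrow> real"
  assumes "finite A" "A \<noteq> {}" "\<forall>i\<in>A. 0 \<le> a i"
  shows "\<exists>S\<subseteq>A. S \<noteq> {} \<and>
    real (card S) * (\<Sum>i\<in>A. (a i)\<^sup>2) \<le> (\<Sum>i\<in>S. a i)\<^sup>2 * (1 + ln (real (card A)))"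
  using assms(1,2)
proof (induction A rule: finite_remove_induct)
  case empty
  then show ?case by simp
next
  case (remove A)
  show ?case
  proof (cases "card A = 1 \<or>
      real (card A) * (\<Sum>i\<in>A. (a i)\<^sup>2) \<le> (\<Sum>i\<in>A. a i)\<^sup>2 * (1 + ln (real (card A)))")
    case whole: True
    have "real (card A) * (\<Sum>i\<in>A. (a i)\<^sup>2) \<le> (\<Sum>i\<in>A. a i)\<^sup>2 * (1 + ln (real (card A)))"
    proof (cases "card A = 1")
      case True
      then obtain x where "A = {x}" by (metis card_1_singletonE)
      then show ?thesis by simp
    qed (use whole in simp)
    then show ?thesis using remove.hyps(2) by blast
  next
    case False
    have "card A \<noteq> 0" using remove.hyps(1,2) by simp
    with False have card_ge: "2 \<le> card A" by linarith
    define m where "m = arg_min_on a A"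
    have m: "m \<in> A" "\<forall>i\<in>A. a m \<le> a i"
      using arg_min_if_finite[OF remove.hyps(1,2), of a] by (auto simp: m_def not_less)
    have card_rest: "card (A - {m}) = card A - 1" using remove.hyps(1) m(1) by simp
    have "A - {m} \<noteq> {}"
    proof
      assume "A - {m} = {}"
      then have "card (A - {m}) = 0" by (simp only: card.empty)
      with card_rest card_ge show False by linarith
    qed
    then obtain S where S: "S \<subseteq> A - {m}" "S \<noteq> {}"
      "real (card S) * (\<Sum>i\<in>A - {m}. (a i)\<^sup>2) \<le> (\<Sum>i\<in>S. a i)\<^sup>2 * (1 + ln (real (card A - 1)))"
      using remove.IH[OF m(1)] card_rest by auto
    have "real (card S) * (\<Sum>i\<in>A. (a i)\<^sup>2) \<le> (\<Sum>i\<in>S. a i)\<^sup>2 * (1 + ln (real (card A)))"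
      using assms(3) remove.hyps(1,3) m card_ge False S(3)
      by (intro sum_squares_bound_drop_minimum) auto
    then show ?thesis using S(1,2) by blast
  qed
qed

definition pos_re_mass :: "nat \<Rightarrow> (nat \<Rightarrow> complex) \<Rightarrow> real" where
  "pos_re_mass N \<phi> = (\<Sum>i\<in>{1..N}. (max 0 (Re (\<phi> i)))\<^sup>2)"

lemma braket_subset_state:
  assumes "S \<subseteq> {1..N}"
  shows "braket N (subset_state S) \<phi> = (\<Sum>i\<in>S. \<phi> i) / complex_of_real (sqrt (real (card S)))"
proof -
  have "braket N (subset_state S) \<phi>
      = (\<Sum>i\<in>{1..N}. if i \<in> S then \<phi> i / complex_of_real (sqrt (real (card S))) else 0)"
    unfolding braket_def subset_state_def by (intro sum.cong) (auto simp: divide_inverse)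
  also have "\<dots> = (\<Sum>i\<in>{1..N} \<inter> S. \<phi> i / complex_of_real (sqrt (real (card S))))"
    by (rule sum.inter_restrict[symmetric]) simp
  also have "{1..N} \<inter> S = S" using assms by blast
  finally show ?thesis by (simp add: sum_divide_distrib)
qed

lemma braket_mult_right: "braket N \<phi> (\<lambda>i. c * \<psi> i) = c * braket N \<phi> \<psi>"
  unfolding braket_def by (simp add: sum_distrib_left mult_ac)

lemma exists_subset_state_overlap_ge_pos_re_mass:
  assumes "0 < pos_re_mass N \<phi>"
  shows "\<exists>S\<subseteq>{1..N}. S \<noteq> {} \<and>
    pos_re_mass N \<phi> \<le> (cmod (braket N (subset_state S) \<phi>))\<^sup>2 * (1 + ln (real N))"
proof -
  define A where "A = {i \<in> {1..N}. 0 < Re (\<phi> i)}"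
  have mass: "pos_re_mass N \<phi> = (\<Sum>i\<in>A. (Re (\<phi> i))\<^sup>2)"
    unfolding pos_re_mass_def A_def by (subst sum.inter_filter) (auto intro!: sum.cong simp: max_def)
  then have "A \<noteq> {}" using assms by auto
  moreover have "finite A" by (simp add: A_def)
  ultimately obtain S where S: "S \<subseteq> A" "S \<noteq> {}"
    "real (card S) * pos_re_mass N \<phi> \<le> (\<Sum>i\<in>S. Re (\<phi> i))\<^sup>2 * (1 + ln (real (card A)))"
    using exists_subset_card_mult_sum_squares_le[of A "\<lambda>i. Re (\<phi> i)"] mass
    by (auto simp: A_def)
  define c where "c = real (card S)"
  define s where "s = (\<Sum>i\<in>S. Re (\<phi> i))"
  have SN: "S \<subseteq> {1..N}" using S(1) by (auto simp: A_def)
  have c_pos: "0 < c" using S(2) finite_subset[OF SN] by (simp add: c_def card_gt_0_iff)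
  have s_nonneg: "0 \<le> s" unfolding s_def using S(1) by (intro sum_nonneg) (auto simp: A_def)
  have "Re (braket N (subset_state S) \<phi>) = s / sqrt c"
    using braket_subset_state[OF SN] by (simp add: s_def c_def Re_divide_of_real)
  then have "s / sqrt c \<le> cmod (braket N (subset_state S) \<phi>)"
    by (metis abs_Re_le_cmod abs_le_D1)
  then have overlap: "s\<^sup>2 / c \<le> (cmod (braket N (subset_state S) \<phi>))\<^sup>2"
    using power_mono[of "s / sqrt c" _ 2] s_nonneg c_pos by (simp add: power_divide)
  have "card A \<le> N" unfolding A_def by (rule order.trans[OF card_mono[of "{1..N}"]]) auto
  moreover have "0 < card A" using \<open>finite A\<close> \<open>A \<noteq> {}\<close> by (simp add: card_gt_0_iff)
  ultimately have ln_le: "0 \<le> 1 + ln (real (card A))" "ln (real (card A)) \<le> ln (real N)"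
    by simp_all
  have "pos_re_mass N \<phi> \<le> s\<^sup>2 / c * (1 + ln (real (card A)))"
    using S(3) c_pos by (simp add: c_def s_def field_simps)
  also have "\<dots> \<le> (cmod (braket N (subset_state S) \<phi>))\<^sup>2 * (1 + ln (real N))"
    using overlap ln_le by (intro mult_mono) auto
  finally show ?thesis using SN S(2) by blast
qed

lemma norm_power2_eq_sum_rotated_pos_re:
  fixes z :: complex
  shows "(cmod z)\<^sup>2 = (max 0 (Re z))\<^sup>2 + (max 0 (Re (- z)))\<^sup>2
    + (max 0 (Re (\<i> * z)))\<^sup>2 + (max 0 (Re (- \<i> * z)))\<^sup>2"
  by (simp add: cmod_power2 max_def)

lemma exists_phase_pos_re_mass_ge:
  assumes "(\<Sum>i\<in>{1..N}. (cmod (\<psi> i))\<^sup>2) = 1"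
  shows "\<exists>c\<in>{1, - 1, \<i>, - \<i>}. 1 / 4 \<le> pos_re_mass N (\<lambda>i. c * \<psi> i)"
proof -
  have "pos_re_mass N (\<lambda>i. 1 * \<psi> i) + pos_re_mass N (\<lambda>i. - 1 * \<psi> i)
      + pos_re_mass N (\<lambda>i. \<i> * \<psi> i) + pos_re_mass N (\<lambda>i. - \<i> * \<psi> i) = 1"
    unfolding pos_re_mass_def assms[symmetric] norm_power2_eq_sum_rotated_pos_re
    by (simp add: sum.distrib)
  then show ?thesis by simp linarith
qed

theorem mainTheorem2:
  fixes n :: nat and psi :: "nat \<Rightarrow> complex"
  assumes "n \<ge> 1"
    and "(\<Sum>i\<in>{1..2^n}. (cmod (psi i))^2) = 1"
  shows "\<exists>S. S \<subseteq> {1..2^n} \<and> S \<noteq> {} \<and>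
           cmod (braket (2^n) (subset_state S) psi) \<ge> 1 / (8 * sqrt (real n + 3))"
proof -
  obtain c where c: "c \<in> {1, - 1, \<i>, - \<i>}" "1 / 4 \<le> pos_re_mass (2^n) (\<lambda>i. c * psi i)"
    using exists_phase_pos_re_mass_ge[OF assms(2)] by blast
  then have "0 < pos_re_mass (2^n) (\<lambda>i. c * psi i)" by linarith
  from exists_subset_state_overlap_ge_pos_re_mass[OF this]
  obtain S where S: "S \<subseteq> {1..2^n}" "S \<noteq> {}" and bound: "pos_re_mass (2^n) (\<lambda>i. c * psi i)
      \<le> (cmod (braket (2^n) (subset_state S) (\<lambda>i. c * psi i)))\<^sup>2 * (1 + ln (real (2^n)))"
    by blast
  have phase_invariant: "cmod (braket (2^n) (subset_state S) (\<lambda>i. c * psi i))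
      = cmod (braket (2^n) (subset_state S) psi)"
    using c(1) by (auto simp: braket_mult_right norm_mult)
  have overlap: "1 / 4 \<le> (cmod (braket (2^n) (subset_state S) psi))\<^sup>2 * (1 + ln (real (2^n)))"
    using bound c(2) unfolding phase_invariant by linarith
  have "ln (real (2^n)) \<le> real n" using ln_2_less_1 by (simp add: ln_realpow mult_left_le)
  then have "(cmod (braket (2^n) (subset_state S) psi))\<^sup>2 * (1 + ln (real (2^n)))
      \<le> (cmod (braket (2^n) (subset_state S) psi))\<^sup>2 * (16 * (real n + 3))"
    by (intro mult_left_mono) simp_all
  with overlap have "1 / (64 * (real n + 3)) \<le> (cmod (braket (2^n) (subset_state S) psi))\<^sup>2"
    by (simp add: field_simps)
  moreover have "(1 / (8 * sqrt (real n + 3)))\<^sup>2 = 1 / (64 * (real n + 3))"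
    by (simp add: power_divide power_mult_distrib)
  ultimately show ?thesis using S by (intro exI[of _ S]) (auto intro: power2_le_imp_le)
qed

end
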